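(* Let $\Gamma$ be the banana graph of genus $g\ge1$ with vertices $v_1,v_2$ and edges $e_1,\dots,e_n$, $n=g+1$. Let $B\in\mathbb Z^{g\times n}$ with $B_{i,1}=1$, $B_{i,i+1}=-1$, other entries $0$, $Q=BB^T$, and for a vertex $\mathbf a$ of $V_Q$ let $\iota_{\mathbf a}$ be the orientation in which $e_i$ goes from $v_2$ to $v_1$ if $(B^T\mathbf a)_i>0$ and from $v_1$ to $v_2$ if $(B^T\mathbf a)_i<0$. For vertices $\mathbf a,\mathbf a'$ of $V_Q$ and $k\in\{1,\dots,g\}$: $\mathbf a\sim\mathbf a'$ with $\mathbf a,\mathbf a'\in[\mathbf k]$ if and only if both $\iota_{\mathbf a}$ and $\iota_{\mathbf a'}$ have exactly $k$ edges outgoing at $v_1$. Equivalently, for $\mathbf a\ne\mathbf a'$, $\mathbf a\sim\mathbf a'$ if and only if the set of edges whose orientation in $\iota_{\mathbf a'}$ differs from that in $\iota_{\mathbf a}$ forms a circuit in $\iota_{\mathbf a}$ (i.e., these edges can be traversed as a closed directed trail in $\iota_{\mathbf a}$, each edge used once).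
   Context: $V_Q=\{\mathbf a\in\mathbb R^g:\ \mathbf a^TQ\mathbf a\le(\mathbf a-\mathbf c)^TQ(\mathbf a-\mathbf c)\ \forall\mathbf c\in\mathbb Z^g\}$; its vertices are $\bigcup_{k=1}^g[\mathbf k]$ where $[\mathbf k]\subset\mathbb R^g$ is the set of vectors with entries in $\{-\tfrac{k}{g+1},\tfrac{g+1-k}{g+1}\}$ having $k$ or $k-1$ entries equal to $\tfrac{g+1-k}{g+1}$. For a vertex $\mathbf a$, $\mathcal D_{\mathbf a,Q}=\{\mathbf c\in\mathbb Z^g:\mathbf a^TQ\mathbf a=(\mathbf a-\mathbf c)^TQ(\mathbf a-\mathbf c)\}$, and $\mathbf a\sim\mathbf a'$ iff $\mathbf a'=\mathbf a-\mathbf c_0$ for some $\mathbf c_0\in\mathcal D_{\mathbf a,Q}$. The orientations $\iota_{\mathbf a}$ are exactly the strongly connected orientations of $\Gamma$. *)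

theory Defs
  imports Complex_Main
begin

text \<open>Banana graph of genus g: vertices v1 = 1, v2 = 2, edges e_1..e_n with n = g+1.
  Vectors in R^g / Z^g are functions nat => real supported on {1..g}.\<close>

definition nedges :: "nat \<Rightarrow> nat" where "nedges g = g + 1"

definition Bmat :: "nat \<Rightarrow> nat \<Rightarrow> int" where
  "Bmat i j = (if j = 1 then 1 else if j = i + 1 then -1 else 0)"

definition Qmat :: "nat \<Rightarrow> nat \<Rightarrow> nat \<Rightarrow> int" where
  "Qmat g i j = (\<Sum>l = 1..nedges g. Bmat i l * Bmat j l)"

definition qform :: "nat \<Rightarrow> (nat \<Rightarrow> real) \<Rightarrow> real" where
  "qform g a = (\<Sum>i = 1..g. \<Sum>j = 1..g. a i * of_int (Qmat g i j) * a j)"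

definition supported :: "nat \<Rightarrow> (nat \<Rightarrow> real) \<Rightarrow> bool" where
  "supported g a \<longleftrightarrow> (\<forall>i. i \<notin> {1..g} \<longrightarrow> a i = 0)"

definition lattice_vec :: "nat \<Rightarrow> (nat \<Rightarrow> real) \<Rightarrow> bool" where
  "lattice_vec g c \<longleftrightarrow> supported g c \<and> (\<forall>i \<in> {1..g}. c i \<in> \<int>)"

definition voronoi :: "nat \<Rightarrow> (nat \<Rightarrow> real) set" where
  "voronoi g = {a. supported g a \<and> (\<forall>c. lattice_vec g c \<longrightarrow> qform g a \<le> qform g (a - c))}"

definition bracket :: "nat \<Rightarrow> nat \<Rightarrow> (nat \<Rightarrow> real) set" where
  "bracket g k = {a. supported g a
     \<and> (\<forall>i \<in> {1..g}. a i = - real k / real (g + 1) \<or> a i = real (g + 1 - k) / real (g + 1))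
     \<and> card {i \<in> {1..g}. a i = real (g + 1 - k) / real (g + 1)} \<in> {k, k - 1}}"

text \<open>Vertices of V_Q, as given in the context: the union of the [k], k = 1..g.\<close>
definition voronoi_vertices :: "nat \<Rightarrow> (nat \<Rightarrow> real) set" where
  "voronoi_vertices g = (\<Union>k \<in> {1..g}. bracket g k)"

definition Dset :: "nat \<Rightarrow> (nat \<Rightarrow> real) \<Rightarrow> (nat \<Rightarrow> real) set" where
  "Dset g a = {c. lattice_vec g c \<and> qform g a = qform g (a - c)}"

definition vsim :: "nat \<Rightarrow> (nat \<Rightarrow> real) \<Rightarrow> (nat \<Rightarrow> real) \<Rightarrow> bool" where
  "vsim g a a' \<longleftrightarrow> (\<exists>c0 \<in> Dset g a. a' = a - c0)"

definition BT :: "nat \<Rightarrow> (nat \<Rightarrow> real) \<Rightarrow> nat \<Rightarrow> real" where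
  "BT g a j = (\<Sum>i = 1..g. of_int (Bmat i j) * a i)"

text \<open>Orientation iota_a: edge j is oriented as (tail, head); v1 = 1, v2 = 2.\<close>
definition iota :: "nat \<Rightarrow> (nat \<Rightarrow> real) \<Rightarrow> nat \<Rightarrow> nat \<times> nat" where
  "iota g a j = (if BT g a j > 0 then (2, 1) else if BT g a j < 0 then (1, 2) else undefined)"

definition out_count_v1 :: "nat \<Rightarrow> (nat \<Rightarrow> nat \<times> nat) \<Rightarrow> nat" where
  "out_count_v1 n ori = card {j \<in> {1..n}. fst (ori j) = 1}"

definition differ_edges :: "nat \<Rightarrow> (nat \<Rightarrow> nat \<times> nat) \<Rightarrow> (nat \<Rightarrow> nat \<times> nat) \<Rightarrow> nat set" where
  "differ_edges n ori ori' = {j \<in> {1..n}. ori j \<noteq> ori' j}"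

definition is_circuit :: "(nat \<Rightarrow> nat \<times> nat) \<Rightarrow> nat set \<Rightarrow> bool" where
  "is_circuit ori S \<longleftrightarrow> (\<exists>es. es \<noteq> [] \<and> distinct es \<and> set es = S \<and>
      (\<forall>j < length es. snd (ori (es ! j)) = fst (ori (es ! ((j + 1) mod length es)))))"

end

theory Submission
  imports Defs
begin

text \<open>For \<open>a \<in> [k]\<close> every entry of \<open>B\<^sup>T a\<close> is \<open>k/(g+1)\<close> or \<open>k/(g+1) - 1\<close>, and since the rows
  of \<open>B\<close> sum to zero exactly \<open>k\<close> entries are negative. Hence \<open>\<iota>\<^sub>a\<close> has \<open>k\<close> edges leaving \<open>v\<^sub>1\<close>,
  and \<open>Q(a) = k(g+1-k)/(g+1)\<close> depends on \<open>k\<close> only. Two vertices of the same \<open>[k]\<close> differ by a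
  lattice vector, so they are equivalent; a lattice vector joining \<open>[k]\<close> to \<open>[k']\<close> forces
  \<open>(k - k')/(g+1) \<in> \<int>\<close>, i.e. \<open>k = k'\<close>. Finally, on a graph with two vertices a set of edges is
  a circuit iff it is non-empty and has as many edges \<open>v\<^sub>1 \<rightarrow> v\<^sub>2\<close> as \<open>v\<^sub>2 \<rightarrow> v\<^sub>1\<close>; for the
  edges where \<open>\<iota>\<^sub>a\<close> and \<open>\<iota>\<^sub>a'\<close> differ, this balance says precisely \<open>k = k'\<close>.\<close>

lemma Ints_divide_less_imp_eq_0:
  assumes "real_of_int d / real n \<in> \<int>" "\<bar>d\<bar> < int n"
  shows "d = 0"
proof -
  obtain m where m: "real_of_int d / real n = of_int m"
    using assms(1) by (auto elim: Ints_cases)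
  have "n > 0"
    using assms(2) by simp
  then have "real_of_int d = real_of_int (m * int n)"
    using m by (simp add: field_simps)
  then have "\<bar>d\<bar> = \<bar>m\<bar> * int n"
    by (simp only: of_int_eq_iff abs_mult)
  moreover have "int n \<le> \<bar>m\<bar> * int n" if "m \<noteq> 0"
    using that by (intro mult_le_cancel_right1[THEN iffD2]) auto
  ultimately show ?thesis
    using assms(2) by fastforce
qed

section \<open>Circuits in a graph with two vertices\<close>

lemma closed_trail_card_le:
  assumes "distinct es"
    and trail: "\<forall>j < length es. snd (ori (es ! j)) = fst (ori (es ! ((j + 1) mod length es)))"
    and two: "\<forall>x \<in> set es. ori x = (u, v) \<or> ori x = (v, u)" and "u \<noteq> v"
  shows "card {x \<in> set es. ori x = (u, v)} \<le> card {x \<in> set es. ori x = (v, u)}"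
proof -
  define L where "L = length es"
  define idx where "idx w = {j. j < L \<and> ori (es ! j) = w}" for w
  have card_idx: "card {x \<in> set es. ori x = w} = card (idx w)" for w
    using distinct_length_filter[OF assms(1), of "\<lambda>x. ori x = w"]
      length_filter_conv_card[of "\<lambda>x. ori x = w" es]
    unfolding idx_def L_def by (simp add: Int_def conj_commute)
  have succ: "(j + 1) mod L = (if j + 1 = L then 0 else j + 1)" if "j < L" for j
    using that by auto
  have "inj_on (\<lambda>j. (j + 1) mod L) (idx (u, v))"
    by (rule inj_onI) (use succ in \<open>auto simp: idx_def split: if_splits\<close>)
  moreover have "(\<lambda>j. (j + 1) mod L) ` idx (u, v) \<subseteq> idx (v, u)"
  proof clarify
    fix j assume "j \<in> idx (u, v)"
    then have j: "j < L" "ori (es ! j) = (u, v)"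
      unfolding idx_def by auto
    define j' where "j' = (j + 1) mod L"
    have "j' < L"
      using j(1) unfolding j'_def by simp
    then have "ori (es ! j') = (u, v) \<or> ori (es ! j') = (v, u)"
      using two unfolding L_def by simp
    moreover have "fst (ori (es ! j')) = v"
      using trail j unfolding j'_def L_def by force
    ultimately have "ori (es ! j') = (v, u)"
      using \<open>u \<noteq> v\<close> by (metis fst_conv)
    then show "j' \<in> idx (v, u)"
      using \<open>j' < L\<close> unfolding idx_def by simp
  qed
  ultimately show ?thesis
    unfolding card_idx by (rule card_inj_on_le) (simp add: idx_def)
qed

definition interleave :: "'a list \<Rightarrow> 'a list \<Rightarrow> 'a list" where
  "interleave xs ys = map (\<lambda>j. if even j then xs ! (j div 2) else ys ! (j div 2)) [0..<2 * length xs]"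

lemma length_interleave [simp]: "length (interleave xs ys) = 2 * length xs"
  by (simp add: interleave_def)

lemma nth_interleave:
  "j < 2 * length xs \<Longrightarrow> interleave xs ys ! j = (if even j then xs ! (j div 2) else ys ! (j div 2))"
  by (simp add: interleave_def)

lemma set_interleave:
  assumes "length ys = length xs"
  shows "set (interleave xs ys) = set xs \<union> set ys"
proof (intro equalityI subsetI)
  fix x assume "x \<in> set (interleave xs ys)"
  then obtain j where "j < 2 * length xs" "x = interleave xs ys ! j"
    by (auto simp: in_set_conv_nth)
  then show "x \<in> set xs \<union> set ys"
    using assms by (auto simp: nth_interleave)
next
  fix x assume "x \<in> set xs \<union> set ys"
  then obtain t where t: "t < length xs" "x = xs ! t \<or> x = ys ! t"
    using assms by (auto simp: in_set_conv_nth)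
  have "interleave xs ys ! (2 * t) \<in> set (interleave xs ys)"
    "interleave xs ys ! (2 * t + 1) \<in> set (interleave xs ys)"
    using t(1) by simp_all
  then show "x \<in> set (interleave xs ys)"
    using t by (auto simp: nth_interleave)
qed

lemma is_circuit_alternating:
  assumes "finite P" "finite R" "P \<inter> R = {}" "card P = card R" "P \<noteq> {}"
    and "\<forall>x \<in> P. ori x = (u, v)" "\<forall>x \<in> R. ori x = (v, u)"
  shows "is_circuit ori (P \<union> R)"
proof -
  define ps where "ps = sorted_list_of_set P"
  define rs where "rs = sorted_list_of_set R"
  define es where "es = interleave ps rs"
  have ps: "length ps = card P" "set ps = P" and rs: "length rs = card P" "set rs = R"
    using assms(1-4) unfolding ps_def rs_def by auto
  have len: "length es = 2 * card P"
    using ps(1) unfolding es_def by simp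
  have set_es: "set es = P \<union> R"
    unfolding es_def using ps rs by (simp add: set_interleave)
  have ori_es: "ori (es ! j) = (if even j then (u, v) else (v, u))" if "j < 2 * card P" for j
    using that assms(6,7) ps rs unfolding es_def by (auto simp: nth_interleave)
  have "distinct es"
    using card_Un_disjoint[OF assms(1-3)] assms(4) len set_es by (intro card_distinct) simp
  moreover have "es \<noteq> []"
    using assms(1,5) len by auto
  moreover have "snd (ori (es ! j)) = fst (ori (es ! ((j + 1) mod length es)))"
    if "j < length es" for j
  proof -
    have "j < 2 * card P" "(j + 1) mod (2 * card P) < 2 * card P"
      using that len by simp_all
    moreover have "even ((j + 1) mod (2 * card P)) \<longleftrightarrow> odd j"
      by (simp add: dvd_mod_iff)
    ultimately show ?thesis
      using ori_es len by (cases "even j") simp_all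
  qed
  ultimately show ?thesis
    unfolding is_circuit_def using set_es by (intro exI[of _ es]) simp
qed

lemma is_circuit_two_vertices_iff:
  assumes "finite S" "u \<noteq> v" and two: "\<forall>x \<in> S. ori x = (u, v) \<or> ori x = (v, u)"
  shows "is_circuit ori S \<longleftrightarrow>
    S \<noteq> {} \<and> card {x \<in> S. ori x = (u, v)} = card {x \<in> S. ori x = (v, u)}"
proof
  assume "is_circuit ori S"
  then obtain es where es: "es \<noteq> []" "distinct es" "set es = S"
    and trail: "\<forall>j < length es. snd (ori (es ! j)) = fst (ori (es ! ((j + 1) mod length es)))"
    unfolding is_circuit_def by auto
  have "card {x \<in> S. ori x = (u, v)} \<le> card {x \<in> S. ori x = (v, u)}"
    using closed_trail_card_le[OF es(2) trail, of u v] two assms(2) es(3) by simp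
  moreover have "card {x \<in> S. ori x = (v, u)} \<le> card {x \<in> S. ori x = (u, v)}"
    using closed_trail_card_le[OF es(2) trail, of v u] two assms(2) es(3) by auto
  moreover have "S \<noteq> {}"
    using es(1,3) by auto
  ultimately show "S \<noteq> {} \<and> card {x \<in> S. ori x = (u, v)} = card {x \<in> S. ori x = (v, u)}"
    by simp
next
  assume balanced: "S \<noteq> {} \<and> card {x \<in> S. ori x = (u, v)} = card {x \<in> S. ori x = (v, u)}"
  define P where "P = {x \<in> S. ori x = (u, v)}"
  define R where "R = {x \<in> S. ori x = (v, u)}"
  have S: "S = P \<union> R"
    using two unfolding P_def R_def by auto
  have fin: "finite P" "finite R"
    using assms(1) unfolding P_def R_def by simp_all
  have "P \<inter> R = {}"
    using assms(2) unfolding P_def R_def by auto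
  moreover have "card P = card R"
    using balanced unfolding P_def R_def by simp
  moreover have "P \<noteq> {}"
  proof
    assume "P = {}"
    then have "R = {}"
      using \<open>card P = card R\<close> fin by simp
    then show False
      using \<open>P = {}\<close> S balanced by simp
  qed
  ultimately show "is_circuit ori S"
    unfolding S using fin P_def R_def by (intro is_circuit_alternating) auto
qed

lemma out_count_v1_add_card_differ_edges:
  assumes "\<forall>j \<in> {1..n}. ori j = (1, 2) \<or> ori j = (2, 1)"
    and "\<forall>j \<in> {1..n}. ori' j = (1, 2) \<or> ori' j = (2, 1)"
  shows "out_count_v1 n ori + card {j \<in> differ_edges n ori ori'. ori j = (2, 1)}
       = out_count_v1 n ori' + card {j \<in> differ_edges n ori ori'. ori j = (1, 2)}"
proof -
  define out where "out \<sigma> = {j \<in> {1..n}. \<sigma> j = (1, 2)}" for \<sigma> :: "nat \<Rightarrow> nat \<times> nat"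
  define P where "P = {j \<in> differ_edges n ori ori'. ori j = (1, 2)}"
  define R where "R = {j \<in> differ_edges n ori ori'. ori j = (2, 1)}"
  have out_count: "out_count_v1 n \<sigma> = card (out \<sigma>)"
    if "\<forall>j \<in> {1..n}. \<sigma> j = (1, 2) \<or> \<sigma> j = (2, 1)" for \<sigma>
    unfolding out_count_v1_def out_def using that by (intro arg_cong[where f = card]) force
  have "out ori \<union> R = out ori' \<union> P"
    using assms unfolding out_def P_def R_def differ_edges_def by auto
  moreover have "out ori \<inter> R = {}" "out ori' \<inter> P = {}"
    unfolding out_def P_def R_def differ_edges_def by auto
  moreover have "finite (out \<sigma>)" for \<sigma>
    unfolding out_def by simp
  moreover have "finite P" "finite R"
    unfolding P_def R_def differ_edges_def by simp_all
  ultimately have "card (out ori) + card R = card (out ori') + card P"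
    by (metis card_Un_disjoint)
  then show ?thesis
    using out_count assms unfolding P_def R_def by simp
qed

section \<open>The vector \<open>B\<^sup>T a\<close>\<close>

lemma BT_1: "BT g a 1 = (\<Sum>i=1..g. a i)"
  by (simp add: BT_def Bmat_def)

lemma BT_Suc:
  assumes "i \<in> {1..g}"
  shows "BT g a (Suc i) = - a i"
proof -
  have "BT g a (Suc i) = (\<Sum>l=1..g. if l = i then - a l else 0)"
    unfolding BT_def Bmat_def using assms by (intro sum.cong) auto
  also have "\<dots> = - a i"
    using assms by simp
  finally show ?thesis .
qed

lemma sum_BT_eq_0: "(\<Sum>j=1..nedges g. BT g a j) = 0"
proof -
  have "(\<Sum>j=1..nedges g. BT g a j) = BT g a 1 + (\<Sum>i=1..g. BT g a (Suc i))"
    unfolding nedges_def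
    by (simp only: sum.atLeast_Suc_atMost[of 1 "g + 1"] sum.shift_bounds_cl_Suc_ivl[symmetric]) simp_all
  also have "\<dots> = 0"
    using BT_1[of g a] by (simp add: BT_Suc sum_negf)
  finally show ?thesis .
qed

lemma qform_eq_sum_BT_squares: "qform g a = (\<Sum>j=1..nedges g. (BT g a j)\<^sup>2)"
proof -
  have "qform g a = (\<Sum>i=1..g. \<Sum>i'=1..g. \<Sum>j=1..nedges g.
      (of_int (Bmat i j) * a i) * (of_int (Bmat i' j) * a i'))"
    unfolding qform_def Qmat_def by (simp add: sum_distrib_left sum_distrib_right mult_ac)
  also have "\<dots> = (\<Sum>j=1..nedges g. \<Sum>i=1..g. \<Sum>i'=1..g.
      (of_int (Bmat i j) * a i) * (of_int (Bmat i' j) * a i'))"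
    by (simp only: sum.swap[where A = "{1..g}" and B = "{1..nedges g}"])
  also have "\<dots> = (\<Sum>j=1..nedges g. (BT g a j)\<^sup>2)"
    unfolding BT_def power2_eq_square sum_product by simp
  finally show ?thesis .
qed

section \<open>Vertices in \<open>[k]\<close>\<close>

lemma bracket_coord_cases:
  assumes "a \<in> bracket g k" "k \<in> {1..g}" "i \<in> {1..g}"
  shows "a i = - real k / real (g + 1) \<or> a i = - real k / real (g + 1) + 1"
proof -
  have "real (g + 1 - k) / real (g + 1) = - real k / real (g + 1) + 1"
    using assms(2) by (simp add: field_simps)
  then show ?thesis
    using assms unfolding bracket_def by auto
qed

lemma BT_bracket_cases:
  assumes a: "a \<in> bracket g k" and k: "k \<in> {1..g}" and j: "j \<in> {1..nedges g}"
  shows "BT g a j = real k / real (g + 1) \<or> BT g a j = real k / real (g + 1) - 1"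
proof (cases "j = 1")
  case True
  define S where "S = {i \<in> {1..g}. a i = real (g + 1 - k) / real (g + 1)}"
  have S_sub: "S \<subseteq> {1..g}"
    unfolding S_def by auto
  have card_S: "card S = k \<or> card S = k - 1"
    using a unfolding bracket_def S_def by auto
  have coord: "a i = - real k / real (g + 1) + of_bool (i \<in> S)" if "i \<in> {1..g}" for i
    using bracket_coord_cases[OF a k that] k that unfolding S_def by (auto simp: field_simps)
  have "BT g a 1 = (\<Sum>i=1..g. - real k / real (g + 1) + of_bool (i \<in> S))"
    unfolding BT_1 by (rule sum.cong) (simp_all add: coord)
  also have "\<dots> = - real g * real k / real (g + 1) + card S"
    using S_sub by (simp add: sum_subtractf Int_absorb1)
  finally show ?thesis
    using True k card_S by (auto simp: field_simps)
next
  case False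
  then obtain i where "j = Suc i" "i \<in> {1..g}"
    using j unfolding nedges_def by (cases j) auto
  then show ?thesis
    using bracket_coord_cases[OF a k] BT_Suc by fastforce
qed

lemma BT_bracket_eq:
  assumes "a \<in> bracket g k" "k \<in> {1..g}" "j \<in> {1..nedges g}"
  shows "BT g a j = real k / real (g + 1) - of_bool (BT g a j < 0)"
proof -
  have "0 < real k / real (g + 1)" "real k / real (g + 1) < 1"
    using assms(2) by auto
  then show ?thesis
    using BT_bracket_cases[OF assms] by auto
qed

lemma card_BT_neg_bracket:
  assumes "a \<in> bracket g k" "k \<in> {1..g}"
  shows "card {j \<in> {1..nedges g}. BT g a j < 0} = k"
proof -
  have "0 = (\<Sum>j=1..nedges g. BT g a j)"
    by (rule sum_BT_eq_0[symmetric])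
  also have "\<dots> = (\<Sum>j=1..nedges g. real k / real (g + 1) - of_bool (BT g a j < 0))"
    using BT_bracket_eq[OF assms] by (intro sum.cong) auto
  also have "\<dots> = real k - card {j \<in> {1..nedges g}. BT g a j < 0}"
    by (simp add: sum_subtractf Int_def conj_commute) (simp add: nedges_def)
  finally show ?thesis
    by simp
qed

lemma qform_bracket:
  assumes "a \<in> bracket g k" "k \<in> {1..g}"
  shows "qform g a = real k * real (g + 1 - k) / real (g + 1)"
proof -
  define n where "n = real (g + 1)"
  define x where "x = real k / n"
  have "n > 0"
    unfolding n_def by simp
  have "qform g a = (\<Sum>j=1..nedges g. x\<^sup>2 - of_bool (BT g a j < 0) * (2 * x - 1))"
    unfolding qform_eq_sum_BT_squares
  proof (rule sum.cong)
    fix j assume "j \<in> {1..nedges g}"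
    then show "(BT g a j)\<^sup>2 = x\<^sup>2 - of_bool (BT g a j < 0) * (2 * x - 1)"
      using BT_bracket_eq[OF assms, of j] unfolding x_def n_def
      by (cases "BT g a j < 0") (simp_all add: power2_diff)
  qed simp
  also have "\<dots> = n * x\<^sup>2 - real k * (2 * x - 1)"
    using card_BT_neg_bracket[OF assms]
    by (simp add: sum_subtractf sum_distrib_right[symmetric] Int_def conj_commute)
      (simp add: nedges_def n_def)
  also have "\<dots> = real k * (n - real k) / n"
    unfolding x_def using \<open>n > 0\<close> by (simp add: field_simps power2_eq_square)
  also have "\<dots> = real k * real (g + 1 - k) / real (g + 1)"
    using assms(2) unfolding n_def by simp
  finally show ?thesis .
qed

lemma iota_bracket:
  assumes "a \<in> bracket g k" "k \<in> {1..g}" "j \<in> {1..nedges g}"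
  shows "iota g a j = (if BT g a j < 0 then (1, 2) else (2, 1))"
proof -
  have "BT g a j \<noteq> 0"
    using BT_bracket_eq[OF assms] assms(2) by (auto split: if_splits)
  then show ?thesis
    unfolding iota_def by auto
qed

lemma iota_bracket_cases:
  assumes "a \<in> bracket g k" "k \<in> {1..g}"
  shows "\<forall>j \<in> {1..nedges g}. iota g a j = (1, 2) \<or> iota g a j = (2, 1)"
  using iota_bracket[OF assms] by simp

lemma out_count_v1_bracket:
  assumes "a \<in> bracket g k" "k \<in> {1..g}"
  shows "out_count_v1 (nedges g) (iota g a) = k"
proof -
  have "{j \<in> {1..nedges g}. fst (iota g a j) = 1} = {j \<in> {1..nedges g}. BT g a j < 0}"
    using iota_bracket[OF assms] by (auto split: if_splits)
  then show ?thesis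
    unfolding out_count_v1_def using card_BT_neg_bracket[OF assms] by simp
qed

lemma bracket_index_unique:
  assumes "a \<in> bracket g k" "k \<in> {1..g}" "a \<in> bracket g k'" "k' \<in> {1..g}"
  shows "k = k'"
  using out_count_v1_bracket[OF assms(1,2)] out_count_v1_bracket[OF assms(3,4)] by simp

lemma vsim_same_bracket:
  assumes a: "a \<in> bracket g k" and a': "a' \<in> bracket g k" and k: "k \<in> {1..g}"
  shows "vsim g a a'"
proof -
  define c where "c = a - a'"
  have "c i \<in> \<int>" if "i \<in> {1..g}" for i
    using bracket_coord_cases[OF a k that] bracket_coord_cases[OF a' k that] unfolding c_def by auto
  moreover have "supported g c"
    using a a' unfolding c_def bracket_def supported_def by auto
  moreover have "a' = a - c"
    unfolding c_def by (simp add: fun_eq_iff)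
  moreover have "qform g a = qform g a'"
    using qform_bracket[OF a k] qform_bracket[OF a' k] by simp
  ultimately show ?thesis
    unfolding vsim_def Dset_def lattice_vec_def by auto
qed

lemma bracket_eq_if_vsim:
  assumes "vsim g a a'" and a: "a \<in> bracket g k" "k \<in> {1..g}" and a': "a' \<in> bracket g k'" "k' \<in> {1..g}"
  shows "k = k'"
proof -
  obtain c where c: "lattice_vec g c" "a' = a - c"
    using assms(1) unfolding vsim_def Dset_def by auto
  have one: "1 \<in> {1..g}"
    using a(2) by simp
  obtain x x' :: real where x: "x \<in> \<int>" "a 1 = - real k / real (g + 1) + x"
    and x': "x' \<in> \<int>" "a' 1 = - real k' / real (g + 1) + x'"
  proof -
    have "a 1 = - real k / real (g + 1) + 0 \<or> a 1 = - real k / real (g + 1) + 1"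
      "a' 1 = - real k' / real (g + 1) + 0 \<or> a' 1 = - real k' / real (g + 1) + 1"
      using bracket_coord_cases[OF a one] bracket_coord_cases[OF a' one] by simp_all
    then show ?thesis
      using that Ints_0 Ints_1 by blast
  qed
  have "c 1 \<in> \<int>"
    using c(1) one unfolding lattice_vec_def by blast
  moreover have "(real k' - real k) / real (g + 1) = c 1 - x + x'"
    using c(2) x(2) x'(2) unfolding diff_divide_distrib by simp
  ultimately have "real_of_int (int k' - int k) / real (g + 1) \<in> \<int>"
    using x(1) x'(1) by simp
  moreover have "\<bar>int k' - int k\<bar> < int (g + 1)"
    using a(2) a'(2) by auto
  ultimately show ?thesis
    using Ints_divide_less_imp_eq_0 by fastforce
qed

lemma vsim_bracket_iff:
  assumes "a \<in> bracket g k" "k \<in> {1..g}" "a' \<in> bracket g k'" "k' \<in> {1..g}"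
  shows "vsim g a a' \<longleftrightarrow> k = k'"
  using vsim_same_bracket bracket_eq_if_vsim assms by blast

lemma differ_edges_bracket_nonempty:
  assumes a: "a \<in> bracket g k" and a': "a' \<in> bracket g k" and k: "k \<in> {1..g}" and "a \<noteq> a'"
  shows "differ_edges (nedges g) (iota g a) (iota g a') \<noteq> {}"
proof -
  obtain i where "a i \<noteq> a' i"
    using \<open>a \<noteq> a'\<close> by auto
  moreover have "supported g a" "supported g a'"
    using a a' unfolding bracket_def by auto
  ultimately have i: "i \<in> {1..g}"
    unfolding supported_def by metis
  have "- real k / real (g + 1) < 0" "0 < - real k / real (g + 1) + 1"
    using k by (auto simp: field_simps)
  then have "a i < 0 \<and> 0 < a' i \<or> 0 < a i \<and> a' i < 0"
    using bracket_coord_cases[OF a k i] bracket_coord_cases[OF a' k i] \<open>a i \<noteq> a' i\<close> by auto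
  moreover have "Suc i \<in> {1..nedges g}"
    using i unfolding nedges_def by simp
  ultimately have "Suc i \<in> differ_edges (nedges g) (iota g a) (iota g a')"
    using iota_bracket[OF a k] iota_bracket[OF a' k] BT_Suc[OF i]
    unfolding differ_edges_def by auto
  then show ?thesis
    by blast
qed

lemma vsim_iff_is_circuit_differ_edges:
  assumes a: "a \<in> bracket g k" "k \<in> {1..g}" and a': "a' \<in> bracket g k'" "k' \<in> {1..g}"
    and "a \<noteq> a'"
  shows "vsim g a a' \<longleftrightarrow> is_circuit (iota g a) (differ_edges (nedges g) (iota g a) (iota g a'))"
proof -
  define D where "D = differ_edges (nedges g) (iota g a) (iota g a')"
  have "k + card {j \<in> D. iota g a j = (2, 1)} = k' + card {j \<in> D. iota g a j = (1, 2)}"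
    using out_count_v1_add_card_differ_edges[OF iota_bracket_cases[OF a] iota_bracket_cases[OF a']]
    unfolding D_def out_count_v1_bracket[OF a] out_count_v1_bracket[OF a'] .
  moreover have "is_circuit (iota g a) D \<longleftrightarrow>
      D \<noteq> {} \<and> card {j \<in> D. iota g a j = (1, 2)} = card {j \<in> D. iota g a j = (2, 1)}"
    using iota_bracket_cases[OF a] by (intro is_circuit_two_vertices_iff) (auto simp: D_def differ_edges_def)
  moreover have "k = k' \<Longrightarrow> D \<noteq> {}"
    using differ_edges_bracket_nonempty a a' \<open>a \<noteq> a'\<close> unfolding D_def by blast
  ultimately show ?thesis
    unfolding vsim_bracket_iff[OF a a'] D_def by linarith
qed

theorem corollary3p11:
  fixes g :: nat and a a' :: "nat \<Rightarrow> real"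
  assumes "g \<ge> 1"
    and "a \<in> voronoi_vertices g" and "a' \<in> voronoi_vertices g"
  shows "(\<forall>k \<in> {1..g}.
            (vsim g a a' \<and> a \<in> bracket g k \<and> a' \<in> bracket g k) \<longleftrightarrow>
            (out_count_v1 (nedges g) (iota g a) = k \<and> out_count_v1 (nedges g) (iota g a') = k))
       \<and> (a \<noteq> a' \<longrightarrow>
            (vsim g a a' \<longleftrightarrow>
             is_circuit (iota g a) (differ_edges (nedges g) (iota g a) (iota g a'))))"
proof -
  obtain ka kb where a: "a \<in> bracket g ka" "ka \<in> {1..g}" and a': "a' \<in> bracket g kb" "kb \<in> {1..g}"
    using assms(2,3) unfolding voronoi_vertices_def by auto
  have "\<forall>k \<in> {1..g}. (vsim g a a' \<and> a \<in> bracket g k \<and> a' \<in> bracket g k) \<longleftrightarrow>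
      (out_count_v1 (nedges g) (iota g a) = k \<and> out_count_v1 (nedges g) (iota g a') = k)"
    using vsim_bracket_iff[OF a a'] a a' unfolding out_count_v1_bracket[OF a] out_count_v1_bracket[OF a']
    by (auto dest: bracket_index_unique[OF a] bracket_index_unique[OF a'])
  moreover have "a \<noteq> a' \<longrightarrow>
      (vsim g a a' \<longleftrightarrow> is_circuit (iota g a) (differ_edges (nedges g) (iota g a) (iota g a')))"
    using vsim_iff_is_circuit_differ_edges[OF a a'] by blast
  ultimately show ?thesis
    by blast
qed

end
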